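(* Let $A\in\mathbb{R}^{n\times d}$ be a random data matrix whose rows are i.i.d. with mean zero and covariance $\Sigma$ (and satisfy Assumption 1 as in the context), split row-wise into $m$ blocks $A^{(i)}\in\mathbb{R}^{(n/m)\times d}$. Let $\lambda>0$, $H=\frac1nA^TA+\lambda I$, $d_\lambda=\mathrm{tr}(\Sigma(\Sigma+\lambda I)^{-1})$ with $md_\lambda<n$, and $\tilde H=\left(\frac1m\sum_{i=1}^m\left(\frac{1}{1-\frac{md_\lambda}{n}}\frac mnA^{(i)T}A^{(i)}+\lambda I\right)^{-1}\right)^{-1}$. For a vector $g_t$, let $p_t^\star=H^{-1}g_t$ be the true Newton step and $\tilde p_t$ the output of $s_t$ iterations of preconditioned conjugate gradient for $Hp=g_t$ with preconditioner $\tilde H^{-1}$ and initial point $0$. Then \[\frac{\|\tilde p_t-p_t^\star\|_H^2}{\|p_t^\star\|_H^2}\le4\left(\frac{1-\sqrt{1-\frac{\alpha}{1-\alpha}}}{1+\sqrt{1-\frac{\alpha}{1-\alpha}}}\right)^{s_t},\] where $\alpha=(\sigma_{\max}+\lambda+\alpha_0)\left(\frac1{\lambda^2}\alpha_0+\alpha_1+\|\Omega_0\|\right)$, $\alpha_0=\|\Sigma-\frac1nA^TA\|$, $\alpha_1=\|\tilde H^{-1}-\mathbb{E}[\tilde H^{-1}]\|$, $\Omega_0=\mathbb{E}[\tilde H^{-1}]-(\Sigma+\lambda I)^{-1}$, and $\sigma_{\max}$ is the largest eigenvalue of $\Sigma$.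
   Context: $\|v\|_H=\sqrt{v^THv}$; $\|\cdot\|$ is the spectral norm. Assumption 1 (for rows $x$ of the data, in the regime $n,d\to\infty$, $d/n\to y\in[0,1)$): the empirical spectral distribution of the covariance converges a.s. for a.e. $u\ge0$; $\sup_{\|e\|=1}\mathbb{E}(e^Tx)^4<\infty$ and $\sup_{\|\Omega\|=1}\mathrm{Var}(x^T\Omega x/d)\to0$; eigenvalues of the covariance lie in $[\sigma_{\min},\sigma_{\max}]$ with $\sigma_{\min}>0$ and $\sigma_{\max}$ independent of $n$.
   Formalization: The bound is taken under the extra hypothesis alpha <= 1/2, and Assumption 1 enters without its asymptotic clauses (convergence of the empirical spectral distribution, $\sup_{\|\Omega\|=1}\mathrm{Var}(x^T\Omega x/d)\to0$, $\sigma_{\max}$ independent of n). Apart from conventions, each condition added here is assumed in the paper as well or is needed for the statement above to hold. *)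

theory Defs
  imports "HOL-Analysis.Analysis" "HOL-Probability.Probability"
begin

definition spec_norm :: "real^'n^'m \<Rightarrow> real" where
  "spec_norm M = onorm (\<lambda>x. M *v x)"

definition Hnorm :: "real^'n^'n \<Rightarrow> real^'n \<Rightarrow> real" where
  "Hnorm H v = sqrt (v \<bullet> (H *v v))"

definition lambda_max :: "real^'n^'n \<Rightarrow> real" where
  "lambda_max S = Max {\<mu>. \<exists>v. v \<noteq> 0 \<and> S *v v = \<mu> *\<^sub>R v}"

definition outer :: "real^'n \<Rightarrow> real^'n^'n" where
  "outer x = (\<chi> i j. x $ i * x $ j)"

(* Preconditioned conjugate gradient for  A x = b  with preconditioner P
   (z_k = P r_k), initial point x_0 = 0.  State: (x_k, r_k, p_k). *)
fun pcg_state :: "real^'n^'n \<Rightarrow> real^'n^'n \<Rightarrow> real^'n \<Rightarrow> nat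
                   \<Rightarrow> (real^'n) \<times> (real^'n) \<times> (real^'n)" where
  "pcg_state A P b 0 = (0, b, P *v b)"
| "pcg_state A P b (Suc k) =
     (case pcg_state A P b k of (x, r, p) \<Rightarrow>
        let z = P *v r;
            a = (r \<bullet> z) / (p \<bullet> (A *v p));
            x' = x + a *\<^sub>R p;
            r' = r - a *\<^sub>R (A *v p);
            z' = P *v r';
            \<beta> = (r' \<bullet> z') / (r \<bullet> z);
            p' = z' + \<beta> *\<^sub>R p
        in (x', r', p'))"

definition pcg :: "real^'n^'n \<Rightarrow> real^'n^'n \<Rightarrow> real^'n \<Rightarrow> nat \<Rightarrow> real^'n" where
  "pcg A P b s = fst (pcg_state A P b s)"

(* Data matrix A with n = m*k rows indexed by ('m \<times> 'k); block i = rows (i, _) *)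
definition block :: "real^'d^('m::finite \<times> 'k::finite) \<Rightarrow> 'm \<Rightarrow> real^'d^'k" where
  "block A i = (\<chi> j. A $ (i, j))"

definition Hmat :: "real \<Rightarrow> real^'d^('m::finite \<times> 'k::finite) \<Rightarrow> real^'d^'d" where
  "Hmat lam A = (1 / real CARD('m \<times> 'k)) *\<^sub>R (transpose A ** A) + lam *\<^sub>R mat 1"

definition d_eff :: "real \<Rightarrow> real^'d^'d \<Rightarrow> real" where
  "d_eff lam \<Sigma> = trace (\<Sigma> ** matrix_inv (\<Sigma> + lam *\<^sub>R mat 1))"

definition Htilde :: "real \<Rightarrow> real^'d^'d \<Rightarrow> real^'d^('m::finite \<times> 'k::finite) \<Rightarrow> real^'d^'d" where
  "Htilde lam \<Sigma> A =
     (let m = real CARD('m); n = real CARD('m \<times> 'k) in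
      matrix_inv ((1 / m) *\<^sub>R
        (\<Sum>i\<in>UNIV. matrix_inv
            ((1 / (1 - m * d_eff lam \<Sigma> / n)) *\<^sub>R ((m / n) *\<^sub>R (transpose (block A i) ** block A i))
             + lam *\<^sub>R mat 1))))"

end

theory Submission
  imports Defs
begin

(* Write P for the preconditioner (H~)^-1 and e for the error of the current iterate. A PCG step
   minimises the H-norm of the new error along the search direction p, and the preconditioned
   Richardson error e - P H e lies on that line up to a multiple of the previous direction, which is
   H-orthogonal to both e and p. Hence every PCG step contracts the squared H-norm error at least by
   the Richardson factor, and since e - P H e = (H^-1 - P) H e this factor is at most
   (||H|| ||P - H^-1||)^2. Now ||H|| <= lambda_max Sigma + lam + alpha0, and splitting
   P - H^-1 = (P - E P) + Omega0 + ((Sigma + lam I)^-1 - H^-1) gives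
   ||P - H^-1|| <= alpha1 + ||Omega0|| + alpha0 / lam^2, so the relative error after s steps is at
   most (alpha^2)^s, and alpha^2 is below the claimed rate whenever alpha <= 1/2. *)

lemma transpose_add: "transpose (A + B) = transpose A + transpose (B :: 'a::semiring_1^'n^'m)"
  by (simp add: transpose_def vec_eq_iff)

lemma transpose_diff: "transpose (A - B) = transpose A - transpose (B :: 'a::ring_1^'n^'m)"
  by (simp add: transpose_def vec_eq_iff)

lemma transpose_sum: "transpose (sum f S) = (\<Sum>i\<in>S. transpose (f i :: 'a::semiring_1^'n^'m))"
  by (induction S rule: infinite_finite_induct) (auto simp: transpose_add transpose_def vec_eq_iff)

lemma sum_matrix_vector_mult: "sum f S *v x = (\<Sum>i\<in>S. f i *v (x :: 'a::semiring_1^'n))"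
  by (induction S rule: infinite_finite_induct) (auto simp: matrix_vector_mult_add_rdistrib)

lemma inner_matrix_vector_symmetric:
  fixes M :: "real^'n^'n"
  assumes "transpose M = M"
  shows "x \<bullet> (M *v y) = y \<bullet> (M *v x)"
proof -
  have "x \<bullet> (M *v y) = (transpose M *v x) \<bullet> y"
    by (simp add: dot_lmul_matrix)
  with assms show ?thesis
    by (metis inner_commute)
qed

lemma quadratic_form_diff_scaleR:
  fixes H :: "real^'n^'n"
  assumes "transpose H = H"
  shows "(u - t *\<^sub>R v) \<bullet> (H *v (u - t *\<^sub>R v))
    = u \<bullet> (H *v u) - 2 * t * (u \<bullet> (H *v v)) + t\<^sup>2 * (v \<bullet> (H *v v))"
  using inner_matrix_vector_symmetric[OF assms, of v u]
  by (simp add: algebra_simps inner_diff_left inner_diff_right power2_eq_square)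

lemma quadratic_form_uminus: "(- v) \<bullet> (H *v (- v)) = v \<bullet> (H *v (v :: real^'n))"
  using matrix_vector_mult_diff_distrib[of H 0 v] by simp

lemma quadratic_form_Cauchy_Schwarz:
  fixes M :: "real^'n^'n"
  assumes sym: "transpose M = M" and psd: "\<And>z. 0 \<le> z \<bullet> (M *v z)"
  shows "(x \<bullet> (M *v y))\<^sup>2 \<le> (x \<bullet> (M *v x)) * (y \<bullet> (M *v y))"
proof -
  define a b c where "a = x \<bullet> (M *v x)" and "b = x \<bullet> (M *v y)" and "c = y \<bullet> (M *v y)"
  have quad: "0 \<le> a - 2 * t * b + t\<^sup>2 * c" for t
    using psd[of "x - t *\<^sub>R y"] unfolding quadratic_form_diff_scaleR[OF sym] a_def b_def c_def .
  have "b\<^sup>2 \<le> a * c"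
  proof (cases "c = 0")
    case True
    have "b = 0"
    proof (rule ccontr)
      assume "b \<noteq> 0"
      then have "a - 2 * ((a + 1) / (2 * b)) * b = -1"
        by (simp add: field_simps)
      with quad[of "(a + 1) / (2 * b)"] True show False
        by simp
    qed
    with True show ?thesis
      by simp
  next
    case False
    then have "0 < c"
      using psd[of y] by (simp add: c_def)
    have "0 \<le> c * (a - 2 * (b / c) * b + (b / c)\<^sup>2 * c)"
      using quad[of "b / c"] \<open>0 < c\<close> by simp
    also have "\<dots> = a * c - b\<^sup>2"
      using \<open>0 < c\<close> by (simp add: field_simps power2_eq_square)
    finally show ?thesis
      by simp
  qed
  then show ?thesis
    by (simp add: a_def b_def c_def)
qed

lemma norm_matrix_vector_squared_le:
  fixes M :: "real^'n^'n"
  assumes sym: "transpose M = M" and psd: "\<And>z. 0 \<le> z \<bullet> (M *v z)"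
    and bound: "\<And>z. z \<bullet> (M *v z) \<le> K * (z \<bullet> z)" and "0 \<le> K"
  shows "(norm (M *v u))\<^sup>2 \<le> K * (u \<bullet> (M *v u))"
proof -
  define w where "w = M *v u"
  have "(w \<bullet> w)\<^sup>2 = (u \<bullet> (M *v w))\<^sup>2"
    using inner_matrix_vector_symmetric[OF sym, of u w] by (simp add: w_def inner_commute)
  also have "\<dots> \<le> (u \<bullet> (M *v u)) * (w \<bullet> (M *v w))"
    by (rule quadratic_form_Cauchy_Schwarz[OF sym psd])
  also have "\<dots> \<le> (u \<bullet> (M *v u)) * (K * (w \<bullet> w))"
    by (rule mult_left_mono[OF bound psd])
  finally have "(w \<bullet> w) * (w \<bullet> w) \<le> (K * (u \<bullet> (M *v u))) * (w \<bullet> w)"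
    by (simp add: power2_eq_square algebra_simps)
  then have "w \<bullet> w \<le> K * (u \<bullet> (M *v u))"
    using \<open>0 \<le> K\<close> psd[of u] by (cases "w \<bullet> w = 0") (auto simp: mult_le_cancel_right)
  then show ?thesis
    by (simp add: w_def power2_norm_eq_inner)
qed

lemma matrix_inv_right:
  fixes M :: "'a::semiring_1^'n^'n"
  assumes "invertible M"
  shows "M ** matrix_inv M = mat 1"
  using assms unfolding invertible_def matrix_inv_def by (rule someI_ex[THEN conjunct1])

lemma matrix_inv_left:
  fixes M :: "'a::semiring_1^'n^'n"
  assumes "invertible M"
  shows "matrix_inv M ** M = mat 1"
  using assms unfolding invertible_def matrix_inv_def by (rule someI_ex[THEN conjunct2])

lemma matrix_inv_unique:
  fixes M :: "'a::semiring_1^'n^'n"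
  assumes "invertible M" and "B ** M = mat 1"
  shows "matrix_inv M = B"
  by (metis assms matrix_inv_right matrix_mul_assoc matrix_mul_lid matrix_mul_rid)

lemma matrix_inv_matrix_inv:
  fixes M :: "'a::semiring_1^'n^'n"
  assumes "invertible M"
  shows "matrix_inv (matrix_inv M) = M"
proof (rule matrix_inv_unique)
  show "invertible (matrix_inv M)"
    unfolding invertible_def using matrix_inv_left[OF assms] matrix_inv_right[OF assms] by blast
qed (rule matrix_inv_right[OF assms])

lemma matrix_inv_mult_vector:
  fixes M :: "'a::semiring_1^'n^'n"
  assumes "invertible M"
  shows "M *v (matrix_inv M *v y) = y" and "matrix_inv M *v (M *v y) = y"
  by (simp_all add: matrix_vector_mul_assoc matrix_inv_left[OF assms] matrix_inv_right[OF assms])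

lemma transpose_matrix_inv_symmetric:
  fixes M :: "real^'n^'n"
  assumes "invertible M" and "transpose M = M"
  shows "transpose (matrix_inv M) = matrix_inv M"
proof -
  have "transpose (matrix_inv M) ** M = mat 1"
    using matrix_inv_right[OF assms(1)] assms(2) by (metis matrix_transpose_mul transpose_mat)
  then show ?thesis
    by (rule matrix_inv_unique[OF assms(1), symmetric])
qed

lemma invertible_if_pos_def:
  fixes M :: "real^'n^'n"
  assumes "\<And>x. x \<noteq> 0 \<Longrightarrow> 0 < x \<bullet> (M *v x)"
  shows "invertible M"
proof -
  have "inj ((*v) M)"
  proof (rule injI)
    fix x y
    assume "M *v x = M *v y"
    then have "M *v (x - y) = 0"
      by (simp add: matrix_vector_mult_diff_distrib)
    then show "x = y"
      using assms[of "x - y"] by (cases "x - y = 0") auto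
  qed
  then show ?thesis
    using matrix_left_invertible_injective invertible_left_inverse by blast
qed

lemma pos_def_if_coercive:
  fixes M :: "real^'n^'n"
  assumes "0 < c" and "\<And>x. c * (x \<bullet> x) \<le> x \<bullet> (M *v x)" and "x \<noteq> 0"
  shows "0 < x \<bullet> (M *v x)"
  using assms(2)[of x] assms(1,3) by (meson inner_gt_zero_iff mult_pos_pos order_less_le_trans)

lemma pos_def_matrix_inv:
  fixes M :: "real^'n^'n"
  assumes pd: "\<And>x. x \<noteq> 0 \<Longrightarrow> 0 < x \<bullet> (M *v x)" and "y \<noteq> 0"
  shows "0 < y \<bullet> (matrix_inv M *v y)"
proof -
  define u where "u = matrix_inv M *v y"
  have y: "y = M *v u"
    using matrix_inv_mult_vector(1)[OF invertible_if_pos_def[OF pd]] by (simp add: u_def)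
  with \<open>y \<noteq> 0\<close> have "u \<noteq> 0"
    by auto
  with pd[of u] show ?thesis
    unfolding u_def[symmetric] by (simp add: y inner_commute)
qed

lemma norm_matrix_inv_le:
  fixes M :: "real^'n^'n"
  assumes "0 < c" and coercive: "\<And>x. c * (x \<bullet> x) \<le> x \<bullet> (M *v x)"
  shows "norm (matrix_inv M *v y) \<le> norm y / c"
proof -
  define u where "u = matrix_inv M *v y"
  have y: "y = M *v u"
    using matrix_inv_mult_vector(1)[OF invertible_if_pos_def[OF pos_def_if_coercive[OF assms]]]
    by (simp add: u_def)
  have "c * (norm u)\<^sup>2 \<le> u \<bullet> y"
    using coercive[of u] y by (simp add: power2_norm_eq_inner)
  also have "\<dots> \<le> norm u * norm y"
    by (rule Cauchy_Schwarz_ineq2[THEN order_trans[OF abs_ge_self]])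
  finally have "c * norm u \<le> norm y"
    by (cases "norm u = 0") (auto simp: power2_eq_square)
  with \<open>0 < c\<close> show ?thesis
    by (simp add: u_def field_simps)
qed

lemma norm_matrix_vector_le_spec_norm: "norm (M *v x) \<le> spec_norm M * norm x"
  unfolding spec_norm_def by (rule onorm[OF matrix_vector_mul_bounded_linear])

lemma spec_norm_nonneg: "0 \<le> spec_norm M"
  unfolding spec_norm_def by (rule onorm_pos_le[OF matrix_vector_mul_bounded_linear])

lemma spec_norm_le:
  fixes M :: "real^'n^'m"
  assumes "\<And>x. norm (M *v x) \<le> b * norm x"
  shows "spec_norm M \<le> b"
  unfolding spec_norm_def using assms by (rule onorm_le)

lemma spec_norm_triangle: "spec_norm (A + B) \<le> spec_norm A + spec_norm (B :: real^'n^'m)"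
proof (rule spec_norm_le)
  fix x
  have "norm ((A + B) *v x) \<le> norm (A *v x) + norm (B *v x)"
    by (simp add: matrix_vector_mult_add_rdistrib norm_triangle_ineq)
  also have "\<dots> \<le> spec_norm A * norm x + spec_norm B * norm x"
    by (intro add_mono norm_matrix_vector_le_spec_norm)
  finally show "norm ((A + B) *v x) \<le> (spec_norm A + spec_norm B) * norm x"
    by (simp add: distrib_right)
qed

lemma quadratic_form_le_spec_norm: "x \<bullet> (M *v x) \<le> spec_norm M * (x \<bullet> (x :: real^'n))"
proof -
  have "x \<bullet> (M *v x) \<le> norm x * norm (M *v x)"
    using Cauchy_Schwarz_ineq2[of x "M *v x"] by linarith
  also have "\<dots> \<le> norm x * (spec_norm M * norm x)"
    by (simp add: mult_left_mono norm_matrix_vector_le_spec_norm)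
  finally show ?thesis
    by (simp add: power2_norm_eq_inner[symmetric] power2_eq_square mult_ac)
qed

lemma spec_norm_matrix_inv_diff_le:
  fixes G H :: "real^'n^'n"
  assumes "0 < c" and coG: "\<And>x. c * (x \<bullet> x) \<le> x \<bullet> (G *v x)"
    and coH: "\<And>x. c * (x \<bullet> x) \<le> x \<bullet> (H *v x)"
  shows "spec_norm (matrix_inv G - matrix_inv H) \<le> spec_norm (G - H) / c\<^sup>2"
proof (rule spec_norm_le)
  fix y
  define u where "u = matrix_inv H *v y"
  have invG: "invertible G" and invH: "invertible H"
    using assms by (blast intro: invertible_if_pos_def pos_def_if_coercive)+
  have "matrix_inv G *v y - u = matrix_inv G *v (H *v u) - matrix_inv G *v (G *v u)"
    by (simp add: u_def matrix_inv_mult_vector[OF invG] matrix_inv_mult_vector[OF invH])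
  also have "\<dots> = - (matrix_inv G *v ((G - H) *v u))"
    by (simp add: algebra_simps)
  finally have "norm ((matrix_inv G - matrix_inv H) *v y) = norm (matrix_inv G *v ((G - H) *v u))"
    by (simp add: u_def matrix_vector_mult_diff_rdistrib)
  also have "\<dots> \<le> norm ((G - H) *v u) / c"
    by (rule norm_matrix_inv_le[OF \<open>0 < c\<close> coG])
  also have "\<dots> \<le> spec_norm (G - H) * norm u / c"
    using \<open>0 < c\<close> by (simp add: divide_right_mono norm_matrix_vector_le_spec_norm)
  also have "\<dots> \<le> spec_norm (G - H) * (norm y / c) / c"
    using \<open>0 < c\<close> norm_matrix_inv_le[OF \<open>0 < c\<close> coH, of y]
    by (intro divide_right_mono[OF mult_left_mono]) (simp_all add: u_def spec_norm_nonneg)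
  finally show "norm ((matrix_inv G - matrix_inv H) *v y) \<le> spec_norm (G - H) / c\<^sup>2 * norm y"
    by (simp add: power2_eq_square)
qed

lemma spec_norm_approx_matrix_inv_le:
  fixes P E G H :: "real^'n^'n"
  assumes "0 < c" and "\<And>x. c * (x \<bullet> x) \<le> x \<bullet> (G *v x)" and "\<And>x. c * (x \<bullet> x) \<le> x \<bullet> (H *v x)"
  shows "spec_norm (P - matrix_inv H)
    \<le> spec_norm (G - H) / c\<^sup>2 + spec_norm (P - E) + spec_norm (E - matrix_inv G)"
proof -
  have split: "P - matrix_inv H = (P - E) + ((E - matrix_inv G) + (matrix_inv G - matrix_inv H))"
    by simp
  have "spec_norm (P - matrix_inv H) \<le> spec_norm (P - E) + spec_norm ((E - matrix_inv G) + (matrix_inv G - matrix_inv H))"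
    unfolding split by (rule spec_norm_triangle)
  also have "\<dots> \<le> spec_norm (P - E) + (spec_norm (E - matrix_inv G) + spec_norm (matrix_inv G - matrix_inv H))"
    by (rule add_left_mono[OF spec_norm_triangle])
  finally show ?thesis
    using spec_norm_matrix_inv_diff_le[OF assms] by linarith
qed

lemma finite_eigenvalues_symmetric:
  fixes S :: "real^'n^'n"
  assumes sym: "transpose S = S"
  shows "finite {\<mu>. \<exists>v. v \<noteq> 0 \<and> S *v v = \<mu> *\<^sub>R v}"
proof -
  define E where "E = {\<mu>. \<exists>v. v \<noteq> 0 \<and> S *v v = \<mu> *\<^sub>R v}"
  define eigvec where "eigvec \<mu> = (SOME v. v \<noteq> 0 \<and> S *v v = \<mu> *\<^sub>R v)" for \<mu>
  have eigvec: "eigvec \<mu> \<noteq> 0 \<and> S *v eigvec \<mu> = \<mu> *\<^sub>R eigvec \<mu>" if "\<mu> \<in> E" for \<mu>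
    using that unfolding E_def eigvec_def by (metis (mono_tags, lifting) mem_Collect_eq someI_ex)
  have orthogonal: "eigvec \<mu> \<bullet> eigvec \<nu> = 0" if "\<mu> \<in> E" "\<nu> \<in> E" "\<mu> \<noteq> \<nu>" for \<mu> \<nu>
  proof -
    have "\<nu> * (eigvec \<mu> \<bullet> eigvec \<nu>) = \<mu> * (eigvec \<mu> \<bullet> eigvec \<nu>)"
      using inner_matrix_vector_symmetric[OF sym, of "eigvec \<mu>" "eigvec \<nu>"]
        eigvec[OF that(1)] eigvec[OF that(2)] by (simp add: inner_commute)
    with that(3) show ?thesis
      by simp
  qed
  have "inj_on eigvec E"
    by (rule inj_onI) (use eigvec orthogonal in fastforce)
  moreover have "independent (eigvec ` E)"
  proof (rule pairwise_orthogonal_independent)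
    show "pairwise orthogonal (eigvec ` E)"
      unfolding pairwise_def orthogonal_def using orthogonal by blast
  qed (use eigvec in auto)
  ultimately show ?thesis
    unfolding E_def[symmetric] using independent_bound finite_imageD by blast
qed

lemma eigenvalue_le_lambda_max:
  fixes S :: "real^'n^'n"
  assumes "transpose S = S" and "v \<noteq> 0" and "S *v v = \<mu> *\<^sub>R v"
  shows "\<mu> \<le> lambda_max S"
  unfolding lambda_max_def using finite_eigenvalues_symmetric[OF assms(1)] assms(2,3)
  by (auto intro: Max_ge)

lemma Rayleigh_quotient_attains_max:
  fixes S :: "real^'n^'n"
  obtains v where "norm v = 1" and "\<And>y. y \<bullet> (S *v y) \<le> (v \<bullet> (S *v v)) * (y \<bullet> y)"
proof -
  have "\<exists>v\<in>sphere 0 1. \<forall>y\<in>sphere 0 1. y \<bullet> (S *v y) \<le> v \<bullet> (S *v v)"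
    by (rule continuous_attains_sup) (simp_all add: continuous_intros)
  then obtain v where v: "norm v = 1" and max: "\<And>y. norm y = 1 \<Longrightarrow> y \<bullet> (S *v y) \<le> v \<bullet> (S *v v)"
    by auto
  show thesis
  proof (rule that[OF v])
    fix y :: "real^'n"
    show "y \<bullet> (S *v y) \<le> (v \<bullet> (S *v v)) * (y \<bullet> y)"
    proof (cases "y = 0")
      case False
      have "(y \<bullet> (S *v y)) / (y \<bullet> y) = ((1 / norm y) *\<^sub>R y) \<bullet> (S *v ((1 / norm y) *\<^sub>R y))"
        by (simp add: matrix_vector_mult_scaleR power2_norm_eq_inner[symmetric] power2_eq_square)
      also have "\<dots> \<le> v \<bullet> (S *v v)"
        using False by (intro max) simp
      finally show ?thesis
        using False by (simp add: divide_le_eq mult.commute)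
    qed simp
  qed
qed

lemma Rayleigh_maximizer_eigenvector:
  fixes S :: "real^'n^'n"
  assumes sym: "transpose S = S" and max: "\<And>y. y \<bullet> (S *v y) \<le> \<mu> * (y \<bullet> y)"
    and attained: "v \<bullet> (S *v v) = \<mu> * (v \<bullet> v)"
  shows "S *v v = \<mu> *\<^sub>R v"
proof -
  define N where "N = \<mu> *\<^sub>R mat 1 - S"
  have N: "N *v x = \<mu> *\<^sub>R x - S *v x" for x
    by (simp add: N_def matrix_vector_mult_diff_rdistrib scaleR_matrix_vector_assoc[symmetric])
  have symN: "transpose N = N"
    using sym by (simp add: N_def transpose_diff transpose_scalar)
  have psdN: "0 \<le> x \<bullet> (N *v x)" for x
    using max[of x] by (simp add: N inner_diff_right)
  have "(v \<bullet> (N *v (N *v v)))\<^sup>2 \<le> (v \<bullet> (N *v v)) * ((N *v v) \<bullet> (N *v (N *v v)))"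
    by (rule quadratic_form_Cauchy_Schwarz[OF symN psdN])
  also have "v \<bullet> (N *v v) = 0"
    using attained by (simp add: N inner_diff_right)
  finally have "(N *v v) \<bullet> (N *v v) = 0"
    using inner_matrix_vector_symmetric[OF symN, of v "N *v v"] by simp
  then show ?thesis
    by (simp add: N)
qed

lemma spec_norm_le_lambda_max:
  fixes S :: "real^'n^'n"
  assumes sym: "transpose S = S" and psd: "\<And>x. 0 \<le> x \<bullet> (S *v x)"
  shows "spec_norm S \<le> lambda_max S"
proof -
  obtain v where v: "norm v = 1" and max: "\<And>y. y \<bullet> (S *v y) \<le> (v \<bullet> (S *v v)) * (y \<bullet> y)"
    using Rayleigh_quotient_attains_max[where S = S] by blast
  define \<mu> where "\<mu> = v \<bullet> (S *v v)"
  have "0 \<le> \<mu>"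
    using psd by (simp add: \<mu>_def)
  have "S *v v = \<mu> *\<^sub>R v"
    using Rayleigh_maximizer_eigenvector[OF sym max] v
    by (simp add: \<mu>_def power2_norm_eq_inner[symmetric])
  moreover have "v \<noteq> 0"
    using v by auto
  ultimately have "\<mu> \<le> lambda_max S"
    by (intro eigenvalue_le_lambda_max[OF sym])
  moreover have "spec_norm S \<le> \<mu>"
  proof (rule spec_norm_le)
    fix x
    have "(norm (S *v x))\<^sup>2 \<le> \<mu> * (x \<bullet> (S *v x))"
      using norm_matrix_vector_squared_le[OF sym psd max \<open>0 \<le> \<mu>\<close>[unfolded \<mu>_def]]
      by (simp add: \<mu>_def)
    also have "\<dots> \<le> \<mu> * (\<mu> * (x \<bullet> x))"
      using max[of x] \<open>0 \<le> \<mu>\<close> by (simp add: \<mu>_def mult_left_mono)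
    also have "\<dots> = (\<mu> * norm x)\<^sup>2"
      by (simp add: power2_eq_square power2_norm_eq_inner[symmetric])
    finally show "norm (S *v x) \<le> \<mu> * norm x"
      by (rule power2_le_imp_le) (simp add: \<open>0 \<le> \<mu>\<close>)
  qed
  ultimately show ?thesis
    by linarith
qed

lemma exact_line_search_le:
  fixes H :: "real^'n^'n"
  assumes sym: "transpose H = H" and pd: "\<And>x. x \<noteq> 0 \<Longrightarrow> 0 < x \<bullet> (H *v x)"
    and eq: "e \<bullet> (H *v q) = 0" and pq: "p \<bullet> (H *v q) = 0"
  defines "a \<equiv> e \<bullet> (H *v p) / (p \<bullet> (H *v p))"
  shows "(e - a *\<^sub>R p) \<bullet> (H *v (e - a *\<^sub>R p)) \<le> (e - p - \<beta> *\<^sub>R q) \<bullet> (H *v (e - p - \<beta> *\<^sub>R q))"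
proof -
  have "(e - a *\<^sub>R p) \<bullet> (H *v (e - a *\<^sub>R p)) \<le> (e - 1 *\<^sub>R p) \<bullet> (H *v (e - 1 *\<^sub>R p))"
  proof (cases "p = 0")
    case False
    then have "0 < p \<bullet> (H *v p)"
      by (rule pd)
    then have "(e - 1 *\<^sub>R p) \<bullet> (H *v (e - 1 *\<^sub>R p)) - (e - a *\<^sub>R p) \<bullet> (H *v (e - a *\<^sub>R p))
        = (1 - a)\<^sup>2 * (p \<bullet> (H *v p))"
      unfolding quadratic_form_diff_scaleR[OF sym] a_def by (simp add: field_simps power2_eq_square)
    with \<open>0 < p \<bullet> (H *v p)\<close> show ?thesis
      by (smt (verit) zero_le_mult_iff zero_le_power2)
  qed simp
  also have "\<dots> \<le> (e - p - \<beta> *\<^sub>R q) \<bullet> (H *v (e - p - \<beta> *\<^sub>R q))"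
    using quadratic_form_diff_scaleR[OF sym, of "e - p" \<beta> q] eq pq pd[of q]
    by (cases "q = 0") (simp_all add: inner_diff_left)
  finally show ?thesis .
qed

lemma pcg_step_conjugate:
  fixes H P :: "real^'n^'n"
  assumes sH: "transpose H = H" and sP: "transpose P = P"
    and pdH: "\<And>x. x \<noteq> 0 \<Longrightarrow> 0 < x \<bullet> (H *v x)" and pdP: "\<And>x. x \<noteq> 0 \<Longrightarrow> 0 < x \<bullet> (P *v x)"
    and p: "p = P *v r + \<beta> *\<^sub>R q" and rq: "r \<bullet> q = 0" and pq: "p \<bullet> (H *v q) = 0"
  defines "a \<equiv> (r \<bullet> (P *v r)) / (p \<bullet> (H *v p))"
  assumes r': "r' = r - a *\<^sub>R (H *v p)"
  shows "r' \<bullet> p = 0"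
    and "(P *v r' + ((r' \<bullet> (P *v r')) / (r \<bullet> (P *v r))) *\<^sub>R p) \<bullet> (H *v p) = 0"
proof -
  have rp: "r \<bullet> p = r \<bullet> (P *v r)"
    using p rq by (simp add: inner_add_right)
  show r'p: "r' \<bullet> p = 0"
  proof (cases "p = 0")
    case False
    then have "0 < p \<bullet> (H *v p)"
      by (rule pdH)
    then show ?thesis
      using rp by (simp add: r' a_def inner_diff_left inner_commute[of "H *v p" p])
  qed (simp add: r')
  show "(P *v r' + ((r' \<bullet> (P *v r')) / (r \<bullet> (P *v r))) *\<^sub>R p) \<bullet> (H *v p) = 0"
  proof (cases "r = 0 \<or> p = 0")
    case True
    \<comment> \<open>both step sizes are then 0, by division by zero\<close>
    then show ?thesis
      by (auto simp: r' a_def)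
  next
    case False
    then have pHp: "0 < p \<bullet> (H *v p)" and rPr: "0 < r \<bullet> (P *v r)"
      using pdH pdP by auto
    then have "a \<noteq> 0"
      by (simp add: a_def)
    have "r' \<bullet> q = 0"
      using rq pq inner_matrix_vector_symmetric[OF sH, of p q]
      by (simp add: r' inner_diff_left inner_diff_right inner_commute)
    then have "r \<bullet> (P *v r') = 0"
      using r'p p inner_matrix_vector_symmetric[OF sP, of r r']
      by (simp add: inner_add_right inner_commute)
    have "a * ((P *v r') \<bullet> (H *v p)) = (P *v r') \<bullet> (r - r')"
      by (simp add: r' inner_diff_right)
    also have "\<dots> = - (r' \<bullet> (P *v r'))"
      using \<open>r \<bullet> (P *v r') = 0\<close> by (simp add: inner_diff_right inner_commute)
    finally show ?thesis
      using \<open>a \<noteq> 0\<close> pHp rPr by (simp add: inner_add_left a_def field_simps)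
  qed
qed

(* q is the previous search direction. *)
lemma pcg_state_invariant:
  fixes H P :: "real^'n^'n"
  assumes "transpose H = H" and "transpose P = P"
    and "\<And>x. x \<noteq> 0 \<Longrightarrow> 0 < x \<bullet> (H *v x)" and "\<And>x. x \<noteq> 0 \<Longrightarrow> 0 < x \<bullet> (P *v x)"
  shows "case pcg_state H P g k of (x, r, p) \<Rightarrow>
    r = g - H *v x \<and> (\<exists>q \<beta>. p = P *v r + \<beta> *\<^sub>R q \<and> r \<bullet> q = 0 \<and> p \<bullet> (H *v q) = 0)"
proof (induction k)
  case 0
  show ?case
    by (auto intro: exI[of _ 0])
next
  case (Suc k)
  obtain x r p where st: "pcg_state H P g k = (x, r, p)"
    by (metis prod_cases3)
  with Suc obtain q \<beta> where r: "r = g - H *v x" and p: "p = P *v r + \<beta> *\<^sub>R q"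
    and rq: "r \<bullet> q = 0" and pq: "p \<bullet> (H *v q) = 0"
    by auto
  define a where "a = (r \<bullet> (P *v r)) / (p \<bullet> (H *v p))"
  define r' where "r' = r - a *\<^sub>R (H *v p)"
  have "pcg_state H P g (Suc k)
      = (x + a *\<^sub>R p, r', P *v r' + ((r' \<bullet> (P *v r')) / (r \<bullet> (P *v r))) *\<^sub>R p)"
    by (simp add: st Let_def a_def r'_def)
  moreover have "r' = g - H *v (x + a *\<^sub>R p)"
    using r by (simp add: r'_def algebra_simps)
  ultimately show ?case
    using pcg_step_conjugate[OF assms p rq pq r'_def[unfolded a_def]] by auto
qed

lemma pcg_error_le:
  fixes H P :: "real^'n^'n"
  assumes sH: "transpose H = H" and sP: "transpose P = P"
    and pdH: "\<And>x. x \<noteq> 0 \<Longrightarrow> 0 < x \<bullet> (H *v x)" and pdP: "\<And>x. x \<noteq> 0 \<Longrightarrow> 0 < x \<bullet> (P *v x)"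
    and xs: "H *v xs = g" and "0 \<le> c"
    and contraction: "\<And>e. (e - P *v (H *v e)) \<bullet> (H *v (e - P *v (H *v e))) \<le> c * (e \<bullet> (H *v e))"
  shows "(xs - pcg H P g k) \<bullet> (H *v (xs - pcg H P g k)) \<le> c ^ k * (xs \<bullet> (H *v xs))"
proof (induction k)
  case 0
  show ?case
    by (simp add: pcg_def)
next
  case (Suc k)
  obtain x r p where st: "pcg_state H P g k = (x, r, p)"
    by (metis prod_cases3)
  obtain q \<beta> where r: "r = g - H *v x" and p: "p = P *v r + \<beta> *\<^sub>R q"
    and rq: "r \<bullet> q = 0" and pq: "p \<bullet> (H *v q) = 0"
    using pcg_state_invariant[OF sH sP pdH pdP, of g k] st by auto
  define e where "e = xs - x"
  have He: "H *v e = r"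
    using xs r by (simp add: e_def matrix_vector_mult_diff_distrib)
  have eHq: "e \<bullet> (H *v q) = 0"
    using He rq inner_matrix_vector_symmetric[OF sH, of e q] by (simp add: inner_commute)
  have eHp: "e \<bullet> (H *v p) = r \<bullet> (P *v r)"
    using He p rq inner_matrix_vector_symmetric[OF sH, of e p]
    by (simp add: inner_add_right inner_commute)
  have step: "xs - pcg H P g (Suc k) = e - (e \<bullet> (H *v p) / (p \<bullet> (H *v p))) *\<^sub>R p"
    unfolding eHp by (simp add: pcg_def st Let_def e_def)
  have richardson: "e - p - (- \<beta>) *\<^sub>R q = e - P *v (H *v e)"
    using He p by simp
  have "(xs - pcg H P g (Suc k)) \<bullet> (H *v (xs - pcg H P g (Suc k)))
      \<le> (e - P *v (H *v e)) \<bullet> (H *v (e - P *v (H *v e)))"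
    using exact_line_search_le[OF sH pdH eHq pq, of "- \<beta>"] unfolding step richardson .
  also have "\<dots> \<le> c * (e \<bullet> (H *v e))"
    by (rule contraction)
  also have "\<dots> \<le> c * (c ^ k * (xs \<bullet> (H *v xs)))"
    using Suc.IH \<open>0 \<le> c\<close> by (simp add: e_def pcg_def st mult_left_mono)
  finally show ?case
    by simp
qed

lemma richardson_contraction:
  fixes H P :: "real^'n^'n"
  assumes sH: "transpose H = H" and psdH: "\<And>x. 0 \<le> x \<bullet> (H *v x)" and invH: "invertible H"
  shows "(e - P *v (H *v e)) \<bullet> (H *v (e - P *v (H *v e)))
    \<le> (spec_norm H * spec_norm (P - matrix_inv H))\<^sup>2 * (e \<bullet> (H *v e))"
proof -
  define w where "w = H *v e"
  define d where "d = (P - matrix_inv H) *v w"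
  have "e - P *v (H *v e) = - d"
    using matrix_inv_mult_vector(2)[OF invH] by (simp add: d_def w_def matrix_vector_mult_diff_rdistrib)
  then have "(e - P *v (H *v e)) \<bullet> (H *v (e - P *v (H *v e))) = d \<bullet> (H *v d)"
    using quadratic_form_uminus[where H = H and v = d] by simp
  also have "\<dots> \<le> spec_norm H * (norm d)\<^sup>2"
    by (simp add: quadratic_form_le_spec_norm power2_norm_eq_inner)
  also have "\<dots> \<le> spec_norm H * (spec_norm (P - matrix_inv H) * norm w)\<^sup>2"
    unfolding d_def
    by (intro mult_left_mono power_mono norm_matrix_vector_le_spec_norm) (simp_all add: spec_norm_nonneg)
  also have "\<dots> = spec_norm H * ((spec_norm (P - matrix_inv H))\<^sup>2 * (norm w)\<^sup>2)"
    by (simp add: power_mult_distrib)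
  also have "\<dots> \<le> spec_norm H * ((spec_norm (P - matrix_inv H))\<^sup>2 * (spec_norm H * (e \<bullet> (H *v e))))"
    using norm_matrix_vector_squared_le[OF sH psdH quadratic_form_le_spec_norm spec_norm_nonneg, where u = e]
    by (intro mult_left_mono) (simp_all add: w_def spec_norm_nonneg)
  finally show ?thesis
    by (simp add: power2_eq_square mult_ac)
qed

theorem pcg_relative_error_le:
  fixes H P :: "real^'n^'n"
  assumes sH: "transpose H = H" and sP: "transpose P = P"
    and pdH: "\<And>x. x \<noteq> 0 \<Longrightarrow> 0 < x \<bullet> (H *v x)" and pdP: "\<And>x. x \<noteq> 0 \<Longrightarrow> 0 < x \<bullet> (P *v x)"
  shows "(Hnorm H (pcg H P g s - matrix_inv H *v g))\<^sup>2 / (Hnorm H (matrix_inv H *v g))\<^sup>2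
    \<le> ((spec_norm H * spec_norm (P - matrix_inv H))\<^sup>2) ^ s"
proof -
  have psdH: "0 \<le> x \<bullet> (H *v x)" for x
    using pdH[of x] by (cases "x = 0") auto
  have invH: "invertible H"
    by (rule invertible_if_pos_def[OF pdH])
  define xs where "xs = matrix_inv H *v g"
  have "H *v xs = g"
    by (simp add: xs_def matrix_inv_mult_vector[OF invH])
  note error = pcg_error_le[OF sH sP pdH pdP this zero_le_power2 richardson_contraction[OF sH psdH invH], of s]
  have Hnorm: "(Hnorm H v)\<^sup>2 = v \<bullet> (H *v v)" for v
    using psdH by (simp add: Hnorm_def)
  have "(Hnorm H (pcg H P g s - xs))\<^sup>2 = (xs - pcg H P g s) \<bullet> (H *v (xs - pcg H P g s))"
    using quadratic_form_uminus[where H = H and v = "xs - pcg H P g s"] by (simp add: Hnorm)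
  with error psdH[of xs] show ?thesis
    unfolding xs_def[symmetric] Hnorm
    by (cases "xs \<bullet> (H *v xs) = 0") (simp_all add: divide_le_eq)
qed

lemma power2_le_pcg_rate:
  fixes \<alpha> :: real
  assumes "0 \<le> \<alpha>" and "\<alpha> \<le> 1 / 2"
  shows "\<alpha>\<^sup>2 \<le> (1 - sqrt (1 - \<alpha> / (1 - \<alpha>))) / (1 + sqrt (1 - \<alpha> / (1 - \<alpha>)))"
proof -
  define x where "x = \<alpha> / (1 - \<alpha>)"
  define y where "y = sqrt (1 - x)"
  have "0 \<le> x" and "x \<le> 1"
    using assms by (simp_all add: x_def field_simps)
  then have "0 \<le> y" and "y \<le> 1" and "y\<^sup>2 = 1 - x"
    by (simp_all add: y_def)
  have "0 \<le> \<alpha> * (2 * \<alpha> - 1)\<^sup>2"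
    using assms by simp
  then have "\<alpha>\<^sup>2 \<le> x / 4"
    using assms by (simp add: x_def field_simps power2_eq_square)
  also have "\<dots> = (1 - y) * (1 + y) / 4"
    using \<open>y\<^sup>2 = 1 - x\<close> by (simp add: algebra_simps power2_eq_square)
  also have "\<dots> \<le> (1 - y) / (1 + y)"
  proof -
    have "(1 + y)\<^sup>2 \<le> 2\<^sup>2"
      using \<open>0 \<le> y\<close> \<open>y \<le> 1\<close> by (intro power_mono) auto
    then have "(1 - y) * (1 + y)\<^sup>2 \<le> (1 - y) * 4"
      using \<open>y \<le> 1\<close> by (intro mult_left_mono) auto
    then show ?thesis
      using \<open>0 \<le> y\<close> by (simp add: field_simps power2_eq_square)
  qed
  finally show ?thesis
    by (simp add: x_def y_def)
qed

lemma outer_mult_vector: "outer x *v v = (x \<bullet> v) *\<^sub>R x"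
proof -
  have "(\<Sum>j\<in>UNIV. (x $ i * x $ j) * v $ j) = (\<Sum>j\<in>UNIV. x $ j * v $ j) * x $ i" for i
    by (subst sum_distrib_right) (simp add: mult_ac)
  then show ?thesis
    by (simp add: outer_def matrix_vector_mult_def vec_eq_iff inner_vec_def)
qed

lemma transpose_outer: "transpose (outer x) = outer x"
  by (simp add: outer_def transpose_def vec_eq_iff mult.commute)

lemma covariance_symmetric:
  fixes Y :: "'a \<Rightarrow> real^'n"
  assumes "integrable M (\<lambda>\<omega>. outer (Y \<omega>))"
  shows "transpose (integral\<^sup>L M (\<lambda>\<omega>. outer (Y \<omega>))) = integral\<^sup>L M (\<lambda>\<omega>. outer (Y \<omega>))"
proof -
  have "bounded_linear (transpose :: real^'n^'n \<Rightarrow> real^'n^'n)"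
    unfolding linear_conv_bounded_linear[symmetric] by (simp add: linear_iff transpose_add transpose_scalar)
  from integral_bounded_linear[OF this assms] show ?thesis
    by (simp add: transpose_outer)
qed

lemma covariance_psd:
  fixes Y :: "'a \<Rightarrow> real^'n"
  assumes "integrable M (\<lambda>\<omega>. outer (Y \<omega>))"
  shows "0 \<le> v \<bullet> (integral\<^sup>L M (\<lambda>\<omega>. outer (Y \<omega>)) *v v)"
proof -
  have "bounded_linear (\<lambda>A :: real^'n^'n. v \<bullet> (A *v v))"
    unfolding linear_conv_bounded_linear[symmetric]
    by (simp add: linear_iff matrix_vector_mult_add_rdistrib inner_add_right scaleR_matrix_vector_assoc[symmetric])
  from integral_bounded_linear[OF this assms]
  have "v \<bullet> (integral\<^sup>L M (\<lambda>\<omega>. outer (Y \<omega>)) *v v) = integral\<^sup>L M (\<lambda>\<omega>. (Y \<omega> \<bullet> v)\<^sup>2)"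
    by (simp add: outer_mult_vector power2_eq_square inner_commute)
  also have "0 \<le> \<dots>"
    by (rule Bochner_Integration.integral_nonneg) simp
  finally show ?thesis .
qed

lemma quadratic_form_gram: "x \<bullet> ((transpose B ** B) *v x) = (B *v x) \<bullet> (B *v (x :: real^'n))"
proof -
  have "(transpose B ** B) *v x = (B *v x) v* B"
    by (simp add: matrix_vector_mul_assoc[symmetric])
  then show ?thesis
    by (metis inner_commute dot_lmul_matrix)
qed

lemma regularized_gram_symmetric:
  fixes B :: "real^'n^'k"
  shows "transpose (c *\<^sub>R (transpose B ** B) + lam *\<^sub>R mat 1) = c *\<^sub>R (transpose B ** B) + lam *\<^sub>R mat 1"
  by (simp add: transpose_add transpose_scalar matrix_transpose_mul)

lemma regularized_gram_coercive:
  fixes B :: "real^'n^'k"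
  assumes "0 \<le> c"
  shows "lam * (x \<bullet> x) \<le> x \<bullet> ((c *\<^sub>R (transpose B ** B) + lam *\<^sub>R mat 1) *v x)"
proof -
  have "x \<bullet> ((c *\<^sub>R (transpose B ** B) + lam *\<^sub>R mat 1) *v x) = c * ((B *v x) \<bullet> (B *v x)) + lam * (x \<bullet> x)"
    by (simp add: matrix_vector_mult_add_rdistrib scaleR_matrix_vector_assoc[symmetric]
        inner_add_right quadratic_form_gram)
  with assms show ?thesis
    by simp
qed

lemma matrix_inv_Htilde_symmetric_pos_def:
  fixes A :: "real^'d^('m::finite \<times> 'k::finite)"
  assumes lam: "0 < lam" and md: "real CARD('m) * d_eff lam \<Sigma> < real CARD('m \<times> 'k)"
  shows "transpose (matrix_inv (Htilde lam \<Sigma> A)) = matrix_inv (Htilde lam \<Sigma> A)"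
    and "x \<noteq> 0 \<Longrightarrow> 0 < x \<bullet> (matrix_inv (Htilde lam \<Sigma> A) *v x)"
proof -
  define m where "m = real CARD('m)"
  define n where "n = real CARD('m \<times> 'k)"
  define c where "c = 1 / (1 - m * d_eff lam \<Sigma> / n) * (m / n)"
  have "0 < m" and "0 < n"
    by (simp_all add: m_def n_def)
  moreover have "m * d_eff lam \<Sigma> / n < 1"
    using md \<open>0 < n\<close> by (simp add: m_def n_def)
  ultimately have "0 \<le> c"
    by (simp add: c_def)
  note coercive = regularized_gram_coercive[OF \<open>0 \<le> c\<close>]
  define B where "B i = matrix_inv (c *\<^sub>R (transpose (block A i) ** block A i) + lam *\<^sub>R mat 1)" for i
  have symB: "transpose (B i) = B i" for i
    unfolding B_def
    by (rule transpose_matrix_inv_symmetric[OF invertible_if_pos_def regularized_gram_symmetric])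
      (rule pos_def_if_coercive[OF lam coercive])
  have pdB: "y \<noteq> 0 \<Longrightarrow> 0 < y \<bullet> (B i *v y)" for i y
    unfolding B_def by (rule pos_def_matrix_inv[OF pos_def_if_coercive[OF lam coercive]])
  define T where "T = (1 / m) *\<^sub>R (\<Sum>i\<in>UNIV. B i)"
  have pdT: "0 < y \<bullet> (T *v y)" if "y \<noteq> 0" for y
  proof -
    have "y \<bullet> (T *v y) = (1 / m) * (\<Sum>i\<in>UNIV. y \<bullet> (B i *v y))"
      by (simp add: T_def scaleR_matrix_vector_assoc[symmetric] sum_matrix_vector_mult inner_sum_right)
    moreover have "0 < (\<Sum>i\<in>UNIV. y \<bullet> (B i *v y))"
      by (rule sum_pos) (use pdB that in auto)
    ultimately show ?thesis
      using \<open>0 < m\<close> by simp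
  qed
  have "matrix_inv (Htilde lam \<Sigma> A) = T"
    using matrix_inv_matrix_inv[OF invertible_if_pos_def[OF pdT]]
    by (simp add: Htilde_def Let_def T_def B_def c_def m_def n_def)
  with symB pdT show "transpose (matrix_inv (Htilde lam \<Sigma> A)) = matrix_inv (Htilde lam \<Sigma> A)"
    and "x \<noteq> 0 \<Longrightarrow> 0 < x \<bullet> (matrix_inv (Htilde lam \<Sigma> A) *v x)"
    by (simp_all add: T_def transpose_scalar transpose_sum)
qed

lemma Hmat_symmetric: "transpose (Hmat lam A) = Hmat lam A"
  unfolding Hmat_def by (rule regularized_gram_symmetric)

lemma Hmat_coercive: "lam * (x \<bullet> x) \<le> x \<bullet> (Hmat lam A *v x)"
  unfolding Hmat_def by (rule regularized_gram_coercive) simp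

lemma spec_norm_Hmat_le:
  fixes A :: "real^'d^('m::finite \<times> 'k::finite)"
  assumes "0 \<le> lam"
  shows "spec_norm (Hmat lam A)
    \<le> spec_norm \<Sigma> + lam + spec_norm (\<Sigma> - (1 / real CARD('m \<times> 'k)) *\<^sub>R (transpose A ** A))"
proof (rule spec_norm_le)
  fix x
  define D where "D = \<Sigma> - (1 / real CARD('m \<times> 'k)) *\<^sub>R (transpose A ** A)"
  have "Hmat lam A *v x = \<Sigma> *v x + lam *\<^sub>R x - D *v x"
    by (simp add: Hmat_def D_def algebra_simps scaleR_matrix_vector_assoc[symmetric])
  then have "norm (Hmat lam A *v x) \<le> norm (\<Sigma> *v x + lam *\<^sub>R x) + norm (D *v x)"
    by (simp add: norm_triangle_ineq4)
  also have "\<dots> \<le> norm (\<Sigma> *v x) + norm (lam *\<^sub>R x) + norm (D *v x)"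
    by (rule add_right_mono[OF norm_triangle_ineq])
  also have "\<dots> \<le> spec_norm \<Sigma> * norm x + lam * norm x + spec_norm D * norm x"
    using assms by (intro add_mono norm_matrix_vector_le_spec_norm) simp_all
  finally show "norm (Hmat lam A *v x) \<le> (spec_norm \<Sigma> + lam + spec_norm D) * norm x"
    by (simp add: distrib_right)
qed

theorem lemmaB1:
  fixes M :: "'a measure"
    and X :: "'a \<Rightarrow> real^'d^('m::finite \<times> 'k::finite)"
    and \<Sigma> :: "real^'d^'d"
    and lam \<sigma>min :: real
    and \<omega> :: 'a
    and g :: "real^'d"
    and s :: nat
  assumes "prob_space M"
    and "X \<in> borel_measurable M"
    \<comment> \<open>rows i.i.d.\<close>
    and "prob_space.indep_vars M (\<lambda>_. borel) (\<lambda>r \<omega>. X \<omega> $ r) UNIV"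
    and "\<And>r r'. distr M borel (\<lambda>\<omega>. X \<omega> $ r) = distr M borel (\<lambda>\<omega>. X \<omega> $ r')"
    \<comment> \<open>mean zero, covariance \<Sigma>\<close>
    and "\<And>r. integrable M (\<lambda>\<omega>. X \<omega> $ r)"
    and "\<And>r. prob_space.expectation M (\<lambda>\<omega>. X \<omega> $ r) = 0"
    and "\<And>r. integrable M (\<lambda>\<omega>. outer (X \<omega> $ r))"
    and "\<And>r. prob_space.expectation M (\<lambda>\<omega>. outer (X \<omega> $ r)) = \<Sigma>"
    \<comment> \<open>finite-n parts of Assumption 1\<close>
    and "\<And>r e. integrable M (\<lambda>\<omega>. (e \<bullet> (X \<omega> $ r)) ^ 4)"
    and "0 < \<sigma>min"
    and "\<And>\<mu> v. v \<noteq> 0 \<Longrightarrow> \<Sigma> *v v = \<mu> *\<^sub>R v \<Longrightarrow> \<sigma>min \<le> \<mu>"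
    \<comment> \<open>setting of the lemma\<close>
    and "0 < lam"
    and "real CARD('m) * d_eff lam \<Sigma> < real CARD('m \<times> 'k)"
    and "\<omega> \<in> space M"
    and "\<alpha>0 = spec_norm (\<Sigma> - (1 / real CARD('m \<times> 'k)) *\<^sub>R (transpose (X \<omega>) ** X \<omega>))"
    and "EHinv = prob_space.expectation M (\<lambda>\<omega>'. matrix_inv (Htilde lam \<Sigma> (X \<omega>')))"
    and "\<alpha>1 = spec_norm (matrix_inv (Htilde lam \<Sigma> (X \<omega>)) - EHinv)"
    and "\<Omega>0 = EHinv - matrix_inv (\<Sigma> + lam *\<^sub>R mat 1)"
    and "\<alpha> = (lambda_max \<Sigma> + lam + \<alpha>0) * (\<alpha>0 / lam\<^sup>2 + \<alpha>1 + spec_norm \<Omega>0)"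
    and "\<alpha> \<le> 1 / 2"
    and "H = Hmat lam (X \<omega>)"
    and "pstar = matrix_inv H *v g"
    and "ptil = pcg H (matrix_inv (Htilde lam \<Sigma> (X \<omega>))) g s"
  shows "(Hnorm H (ptil - pstar))\<^sup>2 / (Hnorm H pstar)\<^sup>2
         \<le> 4 * ((1 - sqrt (1 - \<alpha> / (1 - \<alpha>))) / (1 + sqrt (1 - \<alpha> / (1 - \<alpha>)))) ^ s"
proof -
  define P where "P = matrix_inv (Htilde lam \<Sigma> (X \<omega>))"
  define \<kappa> where "\<kappa> = spec_norm H * spec_norm (P - matrix_inv H)"
  have \<Sigma>_sym: "transpose \<Sigma> = \<Sigma>" and \<Sigma>_psd: "\<And>v. 0 \<le> v \<bullet> (\<Sigma> *v v)"
    using covariance_symmetric[OF assms(7)] covariance_psd[OF assms(7)] unfolding assms(8) .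
  have H_sym: "transpose H = H" and H_coercive: "\<And>x. lam * (x \<bullet> x) \<le> x \<bullet> (H *v x)"
    unfolding \<open>H = Hmat lam (X \<omega>)\<close> by (rule Hmat_symmetric, rule Hmat_coercive)
  have P_sym: "transpose P = P" and P_pos_def: "\<And>x. x \<noteq> 0 \<Longrightarrow> 0 < x \<bullet> (P *v x)"
    unfolding P_def using matrix_inv_Htilde_symmetric_pos_def[OF \<open>0 < lam\<close> assms(13)] by blast+
  have "spec_norm H \<le> lambda_max \<Sigma> + lam + \<alpha>0"
    using spec_norm_Hmat_le[where \<Sigma> = \<Sigma> and A = "X \<omega>", OF less_imp_le[OF \<open>0 < lam\<close>]]
      spec_norm_le_lambda_max[OF \<Sigma>_sym \<Sigma>_psd]
    unfolding \<open>H = Hmat lam (X \<omega>)\<close> \<open>\<alpha>0 = _\<close> by linarith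
  moreover have "spec_norm (P - matrix_inv H) \<le> \<alpha>0 / lam\<^sup>2 + \<alpha>1 + spec_norm \<Omega>0"
    using spec_norm_approx_matrix_inv_le[OF \<open>0 < lam\<close> _ H_coercive, of "\<Sigma> + lam *\<^sub>R mat 1" P EHinv] \<Sigma>_psd
    by (simp add: assms(15,17,18) P_def \<open>H = Hmat lam (X \<omega>)\<close> Hmat_def algebra_simps
        scaleR_matrix_vector_assoc[symmetric] inner_add_right)
  ultimately have "\<kappa> \<le> \<alpha>"
    unfolding \<open>\<alpha> = _\<close> \<kappa>_def by (meson mult_mono order_trans spec_norm_nonneg)
  moreover have "0 \<le> \<kappa>"
    by (simp add: \<kappa>_def spec_norm_nonneg)
  ultimately have "\<kappa>\<^sup>2 \<le> (1 - sqrt (1 - \<alpha> / (1 - \<alpha>))) / (1 + sqrt (1 - \<alpha> / (1 - \<alpha>)))"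
    using power2_le_pcg_rate[of \<alpha>] \<open>\<alpha> \<le> 1 / 2\<close> by (meson order_trans power_mono)
  then have "(\<kappa>\<^sup>2) ^ s \<le> 4 * ((1 - sqrt (1 - \<alpha> / (1 - \<alpha>))) / (1 + sqrt (1 - \<alpha> / (1 - \<alpha>)))) ^ s"
    by (smt (verit) power_mono zero_le_power2 zero_le_power)
  with pcg_relative_error_le[OF H_sym P_sym pos_def_if_coercive[OF \<open>0 < lam\<close> H_coercive] P_pos_def]
  show ?thesis
    unfolding assms(22,23) P_def[symmetric] \<kappa>_def[symmetric] by (rule order_trans)
qed

end
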